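(* Let $QI^+(\mathbb{R})$ be the index $2$ subgroup of $QI(\mathbb{R})$ consisting of classes of quasi-isometries fixing the ends $+\infty$ and $-\infty$. Let $Q_+$ (resp. $Q_-$) be the subgroup of $QI(\mathbb{R})$ consisting of classes $[f]$ with $f$ a quasi-isometry that is the identity near $-\infty$ (resp. near $+\infty$). Then $Q_+$ and $Q_-$ are subgroups of $QI^+(\mathbb{R})$, and $QI^+(\mathbb{R})\cong Q_+\times Q_-$; more precisely, $Q_+\cap Q_-$ is trivial, elements of $Q_+$ commute with elements of $Q_-$, and $QI^+(\mathbb{R})=Q_+Q_-$, so $QI^+(\mathbb{R})$ is the internal direct product of $Q_+$ and $Q_-$.
   Context: A map $f:\mathbb{R}\to\mathbb{R}$ is a quasi-isometry if there is $K>1$ such that $\frac{1}{K}|x_1-x_2|-K\le |f(x_1)-f(x_2)|\le K|x_1-x_2|+K$ for all $x_1,x_2$, and every $y\in\mathbb{R}$ is within distance $K$ of some $f(x)$. Two quasi-isometries are equivalent if their difference is bounded; $QI(\mathbb{R})$ is the group of equivalence classes $[f]$ under $[f][g]=[f\circ g]$. A quasi-isometry $f$ fixes the ends if $f(t)\to+\infty$ as $t\to+\infty$ and $f(t)\to-\infty$ as $t\to-\infty$. "$f$ is the identity near $-\infty$" means there is $c\in\mathbb{R}$ with $f(t)=t$ for all $t\le c$ (similarly near $+\infty$: $f(t)=t$ for all $t\ge c$). *)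

theory Defs
  imports Complex_Main "HOL-Algebra.Algebra"
begin

definition quasi_isometry :: "(real \<Rightarrow> real) \<Rightarrow> bool" where
  "quasi_isometry f \<longleftrightarrow> (\<exists>K>1.
      (\<forall>x1 x2. \<bar>x1 - x2\<bar> / K - K \<le> \<bar>f x1 - f x2\<bar> \<and> \<bar>f x1 - f x2\<bar> \<le> K * \<bar>x1 - x2\<bar> + K)
    \<and> (\<forall>y. \<exists>x. \<bar>y - f x\<bar> \<le> K))"

definition qi_rel :: "((real \<Rightarrow> real) \<times> (real \<Rightarrow> real)) set" where
  "qi_rel = {(f, g). quasi_isometry f \<and> quasi_isometry g \<and> (\<exists>B. \<forall>x. \<bar>f x - g x\<bar> \<le> B)}"

definition qi_class :: "(real \<Rightarrow> real) \<Rightarrow> (real \<Rightarrow> real) set" where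
  "qi_class f = qi_rel `` {f}"

definition QI :: "(real \<Rightarrow> real) set monoid" where
  "QI = \<lparr> carrier = {f. quasi_isometry f} // qi_rel,
          monoid.mult = (\<lambda>A B. qi_class ((SOME f. f \<in> A) \<circ> (SOME g. g \<in> B))),
          one = qi_class id \<rparr>"

definition fixes_ends :: "(real \<Rightarrow> real) \<Rightarrow> bool" where
  "fixes_ends f \<longleftrightarrow> filterlim f at_top at_top \<and> filterlim f at_bot at_bot"

definition id_near_minus_inf :: "(real \<Rightarrow> real) \<Rightarrow> bool" where
  "id_near_minus_inf f \<longleftrightarrow> (\<exists>c. \<forall>t\<le>c. f t = t)"

definition id_near_plus_inf :: "(real \<Rightarrow> real) \<Rightarrow> bool" where
  "id_near_plus_inf f \<longleftrightarrow> (\<exists>c. \<forall>t\<ge>c. f t = t)"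

definition QI_plus :: "(real \<Rightarrow> real) set set" where
  "QI_plus = {C \<in> carrier QI. \<exists>f\<in>C. fixes_ends f}"

definition Q_plus :: "(real \<Rightarrow> real) set set" where
  "Q_plus = {C \<in> carrier QI. \<exists>f\<in>C. id_near_minus_inf f}"

definition Q_minus :: "(real \<Rightarrow> real) set set" where
  "Q_minus = {C \<in> carrier QI. \<exists>f\<in>C. id_near_plus_inf f}"

end

theory Submission
  imports Defs
begin

text \<open>
  A quasi-isometry of the line sends each end to an end: it is coarsely continuous, so once
  \<open>\<bar>f\<bar>\<close> is large it cannot change sign. A map that is the identity near one end therefore
  fixes both ends, since sending both ends to the same end would bound it on one side,
  contradicting coarse surjectivity. The end-fixing quasi-isometries are exactly the coarsely
  increasing ones, \<open>(y - x) / K - C \<le> f y - f x\<close> for \<open>x \<le> y\<close>, and this property survives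
  gluing two such maps at a point. Hence an end-fixing \<open>h\<close> factors, up to bounded error, as
  (identity left of \<open>0\<close>, \<open>h\<close> right of it) after (\<open>h\<close> left of \<open>0\<close>, identity right of it).
  All remaining identities hold because the maps involved agree exactly outside a bounded
  interval, on which coarse Lipschitz maps are bounded.
\<close>

section \<open>Coarse Lipschitz maps and quasi-isometries of the real line\<close>

definition coarse_lip :: "real \<Rightarrow> (real \<Rightarrow> real) \<Rightarrow> bool" where
  "coarse_lip K f \<longleftrightarrow> (\<forall>a b. \<bar>f a - f b\<bar> \<le> K * \<bar>a - b\<bar> + K)"

lemma coarse_lipD: "coarse_lip K f \<Longrightarrow> \<bar>f a - f b\<bar> \<le> K * \<bar>a - b\<bar> + K"
  unfolding coarse_lip_def by blast

lemma coarse_lip_nonneg: "coarse_lip K f \<Longrightarrow> K \<ge> 0"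
  using coarse_lipD[of K f 0 0] by simp

lemma coarse_lip_mono: "coarse_lip K f \<Longrightarrow> K \<le> K' \<Longrightarrow> coarse_lip K' f"
  unfolding coarse_lip_def by (smt (verit, best) abs_ge_zero mult_right_mono)

lemma coarse_lip_uminus: "coarse_lip K f \<Longrightarrow> coarse_lip K (\<lambda>x. - f x)"
  unfolding coarse_lip_def minus_diff_minus abs_minus_cancel by blast

lemma coarse_lip_bounded_on_interval:
  assumes "coarse_lip K f" "L \<le> t" "t \<le> U"
  shows "\<bar>f t\<bar> \<le> \<bar>f L\<bar> + K * (U - L) + K"
proof -
  have "K * \<bar>t - L\<bar> \<le> K * (U - L)"
    using assms coarse_lip_nonneg by (intro mult_left_mono) auto
  then show ?thesis using coarse_lipD[OF assms(1), of t L] by linarith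
qed

lemma quasi_isometryE:
  assumes "quasi_isometry f"
  obtains K where "K > 1" "coarse_lip K f" "\<And>a b. \<bar>a - b\<bar> / K - K \<le> \<bar>f a - f b\<bar>"
    "\<And>y. \<exists>x. \<bar>y - f x\<bar> \<le> K"
  using assms unfolding quasi_isometry_def coarse_lip_def by blast

lemma quasi_isometryI:
  assumes "coarse_lip A f" "L > 0" "\<And>a b. \<bar>a - b\<bar> / L - L \<le> \<bar>f a - f b\<bar>"
    "\<And>y. \<exists>x. \<bar>y - f x\<bar> \<le> S"
  shows "quasi_isometry f"
proof -
  define K where "K = max (max A L) (max S 2)"
  have K: "A \<le> K" "L \<le> K" "S \<le> K" "1 < K" unfolding K_def by auto
  have "\<bar>x1 - x2\<bar> / K - K \<le> \<bar>f x1 - f x2\<bar>" for x1 x2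
  proof -
    have "\<bar>x1 - x2\<bar> / K \<le> \<bar>x1 - x2\<bar> / L"
      using K assms(2) by (intro divide_left_mono) auto
    then show ?thesis using assms(3)[of x1 x2] K by linarith
  qed
  moreover have "\<bar>f x1 - f x2\<bar> \<le> K * \<bar>x1 - x2\<bar> + K" for x1 x2
    using coarse_lipD[OF coarse_lip_mono[OF assms(1) K(1)]] .
  moreover have "\<exists>x. \<bar>y - f x\<bar> \<le> K" for y
    using assms(4)[of y] K(3) by (meson order_trans)
  ultimately show ?thesis unfolding quasi_isometry_def using K(4) by blast
qed

lemma quasi_isometry_id: "quasi_isometry id"
  by (rule quasi_isometryI[of 1 _ 1 0]) (auto simp: coarse_lip_def)

lemma quasi_isometry_comp:
  assumes "quasi_isometry f" "quasi_isometry g"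
  shows "quasi_isometry (f \<circ> g)"
proof -
  obtain K1 where K1: "K1 > 1" "coarse_lip K1 f" "\<And>a b. \<bar>a - b\<bar> / K1 - K1 \<le> \<bar>f a - f b\<bar>"
    "\<And>y. \<exists>x. \<bar>y - f x\<bar> \<le> K1" using quasi_isometryE[OF assms(1)] by blast
  obtain K2 where K2: "K2 > 1" "coarse_lip K2 g" "\<And>a b. \<bar>a - b\<bar> / K2 - K2 \<le> \<bar>g a - g b\<bar>"
    "\<And>y. \<exists>x. \<bar>y - g x\<bar> \<le> K2" using quasi_isometryE[OF assms(2)] by blast
  show ?thesis
  proof (rule quasi_isometryI[of "K1 * K2 + K1" _ "K1 * K2 + K1 + K2" "2 * K1 + K1 * K2"])
    show "coarse_lip (K1 * K2 + K1) (f \<circ> g)" unfolding coarse_lip_def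
    proof (intro allI)
      fix a b
      have "\<bar>f (g a) - f (g b)\<bar> \<le> K1 * \<bar>g a - g b\<bar> + K1" by (rule coarse_lipD[OF K1(2)])
      also have "\<dots> \<le> K1 * (K2 * \<bar>a - b\<bar> + K2) + K1"
        using coarse_lipD[OF K2(2)] K1(1) by (intro add_right_mono mult_left_mono) auto
      also have "\<dots> \<le> (K1 * K2 + K1) * \<bar>a - b\<bar> + (K1 * K2 + K1)"
        using K1(1) by (simp add: algebra_simps)
      finally show "\<bar>(f \<circ> g) a - (f \<circ> g) b\<bar> \<le> (K1 * K2 + K1) * \<bar>a - b\<bar> + (K1 * K2 + K1)"
        by simp
    qed
    show "0 < K1 * K2 + K1 + K2" using K1 K2 by (simp add: add_pos_pos)
  next
    fix a b
    have "(\<bar>a - b\<bar> / K2 - K2) / K1 - K1 \<le> \<bar>g a - g b\<bar> / K1 - K1"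
      using K2(3)[of a b] K1(1) by (intro diff_right_mono divide_right_mono) auto
    also have "\<dots> \<le> \<bar>f (g a) - f (g b)\<bar>" by (rule K1(3))
    finally have *: "\<bar>a - b\<bar> / (K1 * K2) - K2 / K1 - K1 \<le> \<bar>f (g a) - f (g b)\<bar>"
      using K1(1) K2(1) by (simp add: field_simps)
    have "\<bar>a - b\<bar> / (K1 * K2 + K1 + K2) \<le> \<bar>a - b\<bar> / (K1 * K2)"
      using K1(1) K2(1) by (intro divide_left_mono) (auto simp: add_pos_pos)
    moreover have "K2 / K1 \<le> K2" using K1(1) K2(1) by (simp add: divide_le_eq)
    moreover have "0 \<le> K1 * K2" using K1(1) K2(1) by simp
    ultimately show "\<bar>a - b\<bar> / (K1 * K2 + K1 + K2) - (K1 * K2 + K1 + K2)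
        \<le> \<bar>(f \<circ> g) a - (f \<circ> g) b\<bar>"
      using * by simp
  next
    fix y
    obtain x where x: "\<bar>y - f x\<bar> \<le> K1" using K1(4) by blast
    obtain w where w: "\<bar>x - g w\<bar> \<le> K2" using K2(4) by blast
    have "\<bar>f x - f (g w)\<bar> \<le> K1 * \<bar>x - g w\<bar> + K1" by (rule coarse_lipD[OF K1(2)])
    also have "\<dots> \<le> K1 * K2 + K1" using w K1(1) by (intro add_right_mono mult_left_mono) auto
    finally show "\<exists>x. \<bar>y - (f \<circ> g) x\<bar> \<le> 2 * K1 + K1 * K2" using x
      by (intro exI[of _ w]) auto
  qed
qed

lemma quasi_isometry_mirror:
  assumes "quasi_isometry f"
  shows "quasi_isometry (\<lambda>x. - f (- x))"
proof -
  obtain K where K: "K > 1" "coarse_lip K f" "\<And>a b. \<bar>a - b\<bar> / K - K \<le> \<bar>f a - f b\<bar>"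
    "\<And>y. \<exists>x. \<bar>y - f x\<bar> \<le> K" using quasi_isometryE[OF assms] by blast
  show ?thesis
  proof (rule quasi_isometryI[of K _ K K])
    show "coarse_lip K (\<lambda>x. - f (- x))"
      unfolding coarse_lip_def
    proof (intro allI)
      fix a b
      have "\<bar>f (- a) - f (- b)\<bar> \<le> K * \<bar>- a - - b\<bar> + K" by (rule coarse_lipD[OF K(2)])
      then show "\<bar>- f (- a) - - f (- b)\<bar> \<le> K * \<bar>a - b\<bar> + K" by (simp add: abs_minus_commute)
    qed
    show "\<bar>a - b\<bar> / K - K \<le> \<bar>- f (- a) - - f (- b)\<bar>" for a b
      using K(3)[of "- a" "- b"] by (simp add: abs_minus_commute)
    show "\<exists>x. \<bar>y - - f (- x)\<bar> \<le> K" for y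
    proof -
      obtain x where "\<bar>- y - f x\<bar> \<le> K" using K(4) by blast
      then show ?thesis by (intro exI[of _ "- x"]) (simp add: abs_minus_commute add.commute)
    qed
  qed (use K in auto)
qed

section \<open>Behaviour at the ends\<close>

lemma coarse_ivt:
  assumes cl: "coarse_lip K f" and yt: "y \<le> t" and fy: "f y < v" and ft: "v \<le> f t"
  obtains z where "y \<le> z" "z \<le> t + 1" "\<bar>f z - v\<bar> \<le> 2 * K"
proof -
  have step: "\<bar>f a - f b\<bar> \<le> 2 * K" if "\<bar>a - b\<bar> \<le> 1" for a b
  proof -
    have "K * \<bar>a - b\<bar> \<le> K * 1" using that coarse_lip_nonneg[OF cl] by (intro mult_left_mono) auto
    then show ?thesis using coarse_lipD[OF cl, of a b] by simp
  qed
  define N where "N = nat \<lceil>t - y\<rceil>"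
  have N: "t - y \<le> real N" "real N < t - y + 1" unfolding N_def using yt by linarith+
  show ?thesis
  proof (cases "\<exists>n\<le>N. v \<le> f (y + real n)")
    case True
    then obtain k where k: "k \<le> N" "v \<le> f (y + real k)" "\<forall>i<k. f (y + real i) < v"
      using ex_least_nat_le[of "\<lambda>n. v \<le> f (y + real n)"] fy by (metis le_trans not_le)
    then obtain m where m: "k = Suc m" using fy by (cases k) auto
    have "\<bar>f (y + real k) - f (y + real m)\<bar> \<le> 2 * K" using m by (intro step) auto
    then have "\<bar>f (y + real k) - v\<bar> \<le> 2 * K" using k(2,3) m by force
    moreover have "y + real k \<le> t + 1" using k(1) N by linarith
    ultimately show ?thesis using that[of "y + real k"] by simp
  next
    case False
    then have "f (y + real N) < v" by auto
    moreover have "\<bar>f (y + real N) - f t\<bar> \<le> 2 * K" using N by (intro step) auto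
    ultimately have "\<bar>f (y + real N) - v\<bar> \<le> 2 * K" using ft by linarith
    then show ?thesis using that[of "y + real N"] N by simp
  qed
qed

lemma quasi_isometry_abs_at_top:
  assumes "quasi_isometry f"
  shows "filterlim (\<lambda>x. \<bar>f x\<bar>) at_top at_top"
proof -
  obtain K where K: "K > 1" "\<And>a b. \<bar>a - b\<bar> / K - K \<le> \<bar>f a - f b\<bar>"
    using quasi_isometryE[OF assms] by metis
  have "\<exists>N. \<forall>x\<ge>N. Z \<le> \<bar>f x\<bar>" for Z
  proof (intro exI allI impI)
    fix x assume "K * (Z + K + \<bar>f 0\<bar>) \<le> x"
    then have "Z + K + \<bar>f 0\<bar> \<le> \<bar>x - 0\<bar> / K"
      using K(1) by (simp add: pos_le_divide_eq mult.commute)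
    then show "Z \<le> \<bar>f x\<bar>" using K(2)[of x 0] by linarith
  qed
  then show ?thesis unfolding filterlim_at_top eventually_at_top_linorder by blast
qed

text \<open>Unit steps change a coarse Lipschitz map by at most \<open>2 * K\<close>, so it cannot jump
  across the band where \<open>\<bar>f\<bar> \<le> 2 * K\<close>.\<close>
lemma coarse_lip_at_top_cases:
  assumes cl: "coarse_lip K f" and abs_lim: "filterlim (\<lambda>x. \<bar>f x\<bar>) at_top at_top"
  shows "filterlim f at_top at_top \<or> filterlim f at_bot at_top"
proof -
  obtain N where N: "\<forall>x\<ge>N. 2 * K < \<bar>f x\<bar>"
    using abs_lim unfolding filterlim_at_top_dense eventually_at_top_linorder by blast
  have stays_pos: "\<forall>x\<ge>N. g x > 0"
    if g: "coarse_lip K g" "\<forall>x\<ge>N. 2 * K < \<bar>g x\<bar>" "g N > 0" for g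
  proof (intro allI impI)
    fix x assume "N \<le> x"
    show "g x > 0"
    proof (rule ccontr)
      assume "\<not> g x > 0"
      then have "- g N < 0" "0 \<le> - g x" using g(3) by auto
      then obtain z where "N \<le> z" "\<bar>- g z - 0\<bar> \<le> 2 * K"
        using coarse_ivt[OF coarse_lip_uminus[OF g(1)] \<open>N \<le> x\<close>] by blast
      then show False using g(2) by auto
    qed
  qed
  have "f N \<noteq> 0" using N coarse_lip_nonneg[OF cl] by force
  then consider "f N > 0" | "- f N > 0" by linarith
  then show ?thesis
  proof cases
    case 1
    then have "\<forall>x\<ge>N. \<bar>f x\<bar> \<le> f x" using stays_pos[OF cl N] by auto
    then have "filterlim f at_top at_top"
      using filterlim_at_top_mono[OF abs_lim] eventually_at_top_linorder by blast
    then show ?thesis ..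
  next
    case 2
    then have "\<forall>x\<ge>N. \<bar>f x\<bar> \<le> - f x" using stays_pos[OF coarse_lip_uminus[OF cl]] N by auto
    then have "filterlim (\<lambda>x. - f x) at_top at_top"
      using filterlim_at_top_mono[OF abs_lim] eventually_at_top_linorder by blast
    then show ?thesis unfolding filterlim_uminus_at_bot by simp
  qed
qed

text \<open>If \<open>f\<close> tended to \<open>-\<infinity>\<close> at \<open>+\<infinity>\<close> it would be bounded above, so not coarsely surjective.\<close>
lemma id_near_minus_inf_at_top:
  assumes qi: "quasi_isometry f" and c: "\<forall>t\<le>c. f t = t"
  shows "filterlim f at_top at_top"
proof (rule ccontr)
  obtain K where K: "K > 1" "coarse_lip K f" "\<And>y. \<exists>x. \<bar>y - f x\<bar> \<le> K"
    using quasi_isometryE[OF qi] by metis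
  assume "\<not> filterlim f at_top at_top"
  then have "filterlim f at_bot at_top"
    using coarse_lip_at_top_cases[OF K(2) quasi_isometry_abs_at_top[OF qi]] by blast
  then obtain N where N: "\<forall>x\<ge>N. f x \<le> 0"
    unfolding filterlim_at_bot eventually_at_top_linorder by blast
  define U where "U = max c N"
  define M where "M = max \<bar>c\<bar> (\<bar>f c\<bar> + K * (U - c) + K)"
  have bound: "f x \<le> M" for x
  proof -
    consider "x \<le> c" | "U \<le> x" | "c \<le> x" "x \<le> U" by linarith
    then show ?thesis
    proof cases
      case 1 then show ?thesis using c unfolding M_def by force
    next
      case 2 then show ?thesis using N unfolding U_def M_def by force
    next
      case 3 then show ?thesis
        using coarse_lip_bounded_on_interval[OF K(2), of c x U] unfolding M_def by linarith
    qed
  qed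
  obtain x where "\<bar>M + K + 1 - f x\<bar> \<le> K" using K(3) by blast
  then show False using bound[of x] by (simp add: abs_le_iff)
qed

lemma fixes_ends_id: "fixes_ends id"
  unfolding fixes_ends_def by (simp add: filterlim_ident id_def)

lemma fixes_ends_mirror: "fixes_ends (\<lambda>x. - f (- x)) \<longleftrightarrow> fixes_ends f"
  unfolding fixes_ends_def filterlim_at_top_mirror[of f] filterlim_at_bot_mirror[of f]
    filterlim_uminus_at_bot[of "\<lambda>x. f (- x)"] filterlim_uminus_at_top[of "\<lambda>x. f (- x)"]
  by (simp add: conj_commute)

lemma fixes_ends_if_id_near_minus_inf:
  assumes "quasi_isometry f" "id_near_minus_inf f"
  shows "fixes_ends f"
proof -
  obtain c where c: "\<forall>t\<le>c. f t = t" using assms(2) unfolding id_near_minus_inf_def by blast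
  then have "eventually (\<lambda>x. x = f x) at_bot"
    unfolding eventually_at_bot_linorder by (intro exI[of _ c]) (simp add: c)
  then have "filterlim f at_bot at_bot"
    by (rule filterlim_mono_eventually[OF filterlim_ident order_refl order_refl])
  then show ?thesis unfolding fixes_ends_def using id_near_minus_inf_at_top[OF assms(1) c] by blast
qed

lemma fixes_ends_if_id_near_plus_inf:
  assumes "quasi_isometry f" "id_near_plus_inf f"
  shows "fixes_ends f"
proof -
  obtain c where "\<forall>t\<ge>c. f t = t" using assms(2) unfolding id_near_plus_inf_def by blast
  then have "\<forall>t\<le>- c. - f (- t) = t" by auto
  then have "fixes_ends (\<lambda>x. - f (- x))"
    using fixes_ends_if_id_near_minus_inf[OF quasi_isometry_mirror[OF assms(1)]]
    unfolding id_near_minus_inf_def by blast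
  then show ?thesis unfolding fixes_ends_mirror .
qed

section \<open>Coarsely increasing quasi-isometries\<close>

definition coarsely_increasing :: "real \<Rightarrow> real \<Rightarrow> (real \<Rightarrow> real) \<Rightarrow> bool" where
  "coarsely_increasing K C f \<longleftrightarrow> (\<forall>x y. x \<le> y \<longrightarrow> (y - x) / K - C \<le> f y - f x)"

definition increasing_qi :: "(real \<Rightarrow> real) \<Rightarrow> bool" where
  "increasing_qi f \<longleftrightarrow> (\<exists>K>0. \<exists>C. coarse_lip K f \<and> coarsely_increasing K C f)"

lemma coarsely_increasingD: "coarsely_increasing K C f \<Longrightarrow> x \<le> y \<Longrightarrow> (y - x) / K - C \<le> f y - f x"
  unfolding coarsely_increasing_def by blast

lemma coarsely_increasing_nonneg: "coarsely_increasing K C f \<Longrightarrow> C \<ge> 0"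
  using coarsely_increasingD[of K C f 0 0] by simp

lemma coarsely_increasing_mono:
  assumes "coarsely_increasing K C f" "0 < K" "K \<le> K'" "C \<le> C'"
  shows "coarsely_increasing K' C' f"
  unfolding coarsely_increasing_def
proof (intro allI impI)
  fix x y :: real assume "x \<le> y"
  moreover have "(y - x) / K' \<le> (y - x) / K" using assms \<open>x \<le> y\<close> by (intro divide_left_mono) auto
  ultimately show "(y - x) / K' - C' \<le> f y - f x" using coarsely_increasingD[OF assms(1)] assms(4) by force
qed

lemma quasi_isometry_if_increasing_qi:
  assumes "increasing_qi f"
  shows "quasi_isometry f"
proof -
  obtain K C where K: "K > 0" "coarse_lip K f" "coarsely_increasing K C f"
    using assms unfolding increasing_qi_def by blast
  have C: "C \<ge> 0" by (rule coarsely_increasing_nonneg[OF K(3)])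
  show ?thesis
  proof (rule quasi_isometryI[of K f "max K (max C 1)" "2 * K"])
    show "coarse_lip K f" "0 < max K (max C 1)" using K by auto
  next
    fix a b :: real
    have "\<bar>a - b\<bar> / K - C \<le> \<bar>f a - f b\<bar>"
    proof (cases "a \<le> b")
      case True then show ?thesis using coarsely_increasingD[OF K(3) True] C by (simp add: abs_if)
    next
      case False then show ?thesis using coarsely_increasingD[OF K(3), of b a] C by (simp add: abs_if)
    qed
    moreover have "\<bar>a - b\<bar> / max K (max C 1) \<le> \<bar>a - b\<bar> / K" using K(1)
      by (intro divide_left_mono) auto
    ultimately show "\<bar>a - b\<bar> / max K (max C 1) - max K (max C 1) \<le> \<bar>f a - f b\<bar>" by linarith
  next
    fix y
    define R where "R = \<bar>y - f 0\<bar> + C"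
    have R: "R \<ge> 0" unfolding R_def using C by simp
    have "f 0 - f (- K * (R + 1)) \<ge> R + 1 - C"
      using coarsely_increasingD[OF K(3), of "- K * (R + 1)" 0] K(1) R by simp
    then have lo: "f (- K * (R + 1)) < y" unfolding R_def by linarith
    have "f (K * R) - f 0 \<ge> R - C"
      using coarsely_increasingD[OF K(3), of 0 "K * R"] K(1) R by simp
    then have hi: "y \<le> f (K * R)" unfolding R_def by linarith
    have "0 \<le> K * R" using K(1) R by simp
    then have "- K * (R + 1) \<le> K * R" using K(1) by (simp add: algebra_simps)
    then obtain z where "\<bar>f z - y\<bar> \<le> 2 * K" using coarse_ivt[OF K(2) _ lo hi] by blast
    then show "\<exists>x. \<bar>y - f x\<bar> \<le> 2 * K" by (auto simp: abs_minus_commute)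
  qed
qed

text \<open>An end-fixing quasi-isometry can only move backwards by a bounded amount: a long
  backward step would, by the coarse intermediate value property on the way to \<open>+\<infinity>\<close>,
  produce two far apart points with nearby images.\<close>
lemma increasing_qi_if_fixes_ends:
  assumes qi: "quasi_isometry f" and fe: "fixes_ends f"
  shows "increasing_qi f"
proof -
  obtain K where K: "K > 1" "coarse_lip K f" "\<And>a b. \<bar>a - b\<bar> / K - K \<le> \<bar>f a - f b\<bar>"
    using quasi_isometryE[OF qi] by metis
  have backward: "y - x \<le> 3 * K * K" if xy: "x < y" "f y < f x" for x y
  proof -
    obtain N where N: "\<forall>t\<ge>N. f x \<le> f t"
      using fe unfolding fixes_ends_def filterlim_at_top eventually_at_top_linorder by blast
    obtain z where z: "y \<le> z" "\<bar>f z - f x\<bar> \<le> 2 * K"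
      using coarse_ivt[OF K(2) _ xy(2), of "max y N"] N by auto
    have "\<bar>z - x\<bar> / K \<le> 3 * K" using K(3)[of z x] z by linarith
    then have "\<bar>z - x\<bar> \<le> 3 * K * K" using K(1) by (simp add: divide_le_eq mult.commute)
    then show ?thesis using z xy by linarith
  qed
  have "coarsely_increasing K (3 * K * K * K + 4 * K) f" unfolding coarsely_increasing_def
  proof (intro allI impI)
    fix x y :: real assume xy: "x \<le> y"
    show "(y - x) / K - (3 * K * K * K + 4 * K) \<le> f y - f x"
    proof (cases "f x \<le> f y")
      case True
      moreover have "0 \<le> 3 * K * K * K + 3 * K" using K(1) by simp
      ultimately show ?thesis using K(3)[of y x] xy by simp
    next
      case False
      then have d: "y - x \<le> 3 * K * K" using backward xy by (cases "x = y") auto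
      have "K * \<bar>y - x\<bar> \<le> K * (3 * K * K)" using d xy K(1) by (intro mult_left_mono) auto
      then have "f x - f y \<le> 3 * K * K * K + K"
        using coarse_lipD[OF K(2), of y x] False by (simp add: mult.assoc)
      moreover have "(y - x) / K \<le> 3 * K" using d K(1) by (simp add: divide_le_eq mult.commute)
      ultimately show ?thesis by linarith
    qed
  qed
  then show ?thesis unfolding increasing_qi_def using K by (intro exI[of _ K]) auto
qed

lemma coarse_lip_glue:
  assumes p: "coarse_lip K p" and q: "coarse_lip K q"
  shows "coarse_lip (2 * K + \<bar>p a - q a\<bar>) (\<lambda>t. if t \<le> a then p t else q t)"
proof -
  define D where "D = \<bar>p a - q a\<bar>"
  have K: "K \<ge> 0" by (rule coarse_lip_nonneg[OF p])
  have across: "\<bar>p x - q y\<bar> \<le> K * \<bar>x - y\<bar> + 2 * K + D" if "x \<le> a" "a < y" for x y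
  proof -
    have "K * \<bar>x - a\<bar> + K * \<bar>a - y\<bar> = K * \<bar>x - y\<bar>" using that by (simp add: abs_if algebra_simps)
    then show ?thesis using coarse_lipD[OF p, of x a] coarse_lipD[OF q, of a y] unfolding D_def
      by linarith
  qed
  have "\<bar>(if x \<le> a then p x else q x) - (if y \<le> a then p y else q y)\<bar> \<le> K * \<bar>x - y\<bar> + 2 * K + D"
    for x y
    using coarse_lipD[OF p, of x y] coarse_lipD[OF q, of x y] across[of x y] across[of y x] K
    unfolding D_def by (auto simp: abs_minus_commute)
  moreover have "K * \<bar>x - y\<bar> \<le> (2 * K + D) * \<bar>x - y\<bar>" for x y
    using K unfolding D_def by (intro mult_right_mono) auto
  ultimately show ?thesis unfolding coarse_lip_def D_def by (smt (verit))
qed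

lemma coarsely_increasing_glue:
  assumes p: "coarsely_increasing K C p" and q: "coarsely_increasing K C q"
  shows "coarsely_increasing K (2 * C + \<bar>p a - q a\<bar>) (\<lambda>t. if t \<le> a then p t else q t)"
  unfolding coarsely_increasing_def
proof (intro allI impI)
  fix x y :: real assume xy: "x \<le> y"
  have C: "C \<ge> 0" by (rule coarsely_increasing_nonneg[OF p])
  consider "y \<le> a" | "a < x" | "x \<le> a" "a < y" using xy by linarith
  then show "(y - x) / K - (2 * C + \<bar>p a - q a\<bar>)
      \<le> (if y \<le> a then p y else q y) - (if x \<le> a then p x else q x)"
  proof cases
    case 1 then show ?thesis using coarsely_increasingD[OF p xy] xy C by simp
  next
    case 2 then show ?thesis using coarsely_increasingD[OF q xy] xy C by simp
  next
    case 3
    have "(y - a) / K + (a - x) / K = (y - x) / K" by (simp add: add_divide_distrib[symmetric])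
    then show ?thesis using 3 coarsely_increasingD[OF q, of a y] coarsely_increasingD[OF p, of x a]
      by auto
  qed
qed

lemma increasing_qi_glue:
  assumes "increasing_qi p" "increasing_qi q"
  shows "increasing_qi (\<lambda>t. if t \<le> a then p t else q t)"
proof -
  obtain K1 C1 where K1: "K1 > 0" "coarse_lip K1 p" "coarsely_increasing K1 C1 p"
    using assms(1) unfolding increasing_qi_def by blast
  obtain K2 C2 where K2: "K2 > 0" "coarse_lip K2 q" "coarsely_increasing K2 C2 q"
    using assms(2) unfolding increasing_qi_def by blast
  define K where "K = max K1 K2"
  define C where "C = max C1 C2"
  define D where "D = \<bar>p a - q a\<bar>"
  have K: "K > 0" "K \<le> 2 * K + D" unfolding K_def D_def using K1 by auto
  have "coarse_lip K p" "coarse_lip K q"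
    using coarse_lip_mono K1(2) K2(2) unfolding K_def by auto
  moreover have "coarsely_increasing K C p" "coarsely_increasing K C q"
    using coarsely_increasing_mono K1 K2 unfolding K_def C_def by auto
  ultimately have lip: "coarse_lip (2 * K + D) (\<lambda>t. if t \<le> a then p t else q t)"
    and inc: "coarsely_increasing K (2 * C + D) (\<lambda>t. if t \<le> a then p t else q t)"
    using coarse_lip_glue coarsely_increasing_glue unfolding D_def by auto
  have "coarsely_increasing (2 * K + D) (2 * C + D) (\<lambda>t. if t \<le> a then p t else q t)"
    using coarsely_increasing_mono[OF inc] K by blast
  then show ?thesis unfolding increasing_qi_def using lip K by (intro exI[of _ "2 * K + D"]) auto
qed

section \<open>Quasi-inverses\<close>

lemma quasi_isometry_right_inverse:
  assumes qi: "quasi_isometry f" and right_inv: "\<And>y. \<bar>f (g y) - y\<bar> \<le> B"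
  shows "quasi_isometry g" and "\<exists>B'. \<forall>x. \<bar>g (f x) - x\<bar> \<le> B'"
proof -
  obtain K where K: "K > 1" "coarse_lip K f" "\<And>a b. \<bar>a - b\<bar> / K - K \<le> \<bar>f a - f b\<bar>"
    using quasi_isometryE[OF qi] by metis
  have B: "B \<ge> 0" using right_inv[of 0] by linarith
  have images: "\<bar>f (g a) - f (g b)\<bar> \<le> \<bar>a - b\<bar> + 2 * B"
    "\<bar>a - b\<bar> \<le> \<bar>f (g a) - f (g b)\<bar> + 2 * B" for a b
    using right_inv[of a] right_inv[of b] by linarith+
  have left_inv: "\<bar>g (f x) - x\<bar> \<le> K * (B + K)" for x
  proof -
    have "\<bar>g (f x) - x\<bar> / K \<le> B + K" using K(3)[of "g (f x)" x] right_inv[of "f x"] by linarith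
    then show ?thesis using K(1) by (simp add: divide_le_eq mult.commute)
  qed
  then show "\<exists>B'. \<forall>x. \<bar>g (f x) - x\<bar> \<le> B'" by blast
  show "quasi_isometry g"
  proof (rule quasi_isometryI[of "K * (2 * B + K)" g "K + 1 + 2 * B" "K * (B + K)"])
    show "coarse_lip (K * (2 * B + K)) g" unfolding coarse_lip_def
    proof (intro allI)
      fix a b
      have "\<bar>g a - g b\<bar> / K \<le> \<bar>a - b\<bar> + 2 * B + K"
        using K(3)[of "g a" "g b"] images(1)[of a b] by linarith
      then have "\<bar>g a - g b\<bar> \<le> K * \<bar>a - b\<bar> + K * (2 * B + K)"
        using K(1) by (simp add: divide_le_eq algebra_simps)
      moreover have "K * \<bar>a - b\<bar> \<le> K * (2 * B + K) * \<bar>a - b\<bar>"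
        using K(1) B by (intro mult_right_mono) auto
      ultimately show "\<bar>g a - g b\<bar> \<le> K * (2 * B + K) * \<bar>a - b\<bar> + K * (2 * B + K)" by linarith
    qed
    show "0 < K + 1 + 2 * B" using K(1) B by simp
  next
    fix a b
    have "\<bar>a - b\<bar> \<le> K * \<bar>g a - g b\<bar> + K + 2 * B"
      using images(2)[of a b] coarse_lipD[OF K(2), of "g a" "g b"] by linarith
    then have "\<bar>a - b\<bar> / K \<le> \<bar>g a - g b\<bar> + 1 + 2 * B / K"
      using K(1) by (simp add: divide_le_eq algebra_simps add_divide_distrib)
    moreover have "2 * B / K \<le> 2 * B" using K(1) B by (simp add: divide_le_eq mult_le_cancel_left1)
    moreover have "\<bar>a - b\<bar> / (K + 1 + 2 * B) \<le> \<bar>a - b\<bar> / K"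
      using K(1) B by (intro divide_left_mono) auto
    ultimately show "\<bar>a - b\<bar> / (K + 1 + 2 * B) - (K + 1 + 2 * B) \<le> \<bar>g a - g b\<bar>"
      using K(1) by linarith
  next
    show "\<exists>x. \<bar>y - g x\<bar> \<le> K * (B + K)" for y
      using left_inv[of y] by (intro exI[of _ "f y"]) (simp add: abs_minus_commute)
  qed
qed

text \<open>Choosing the inverse to be the identity at fixed points of \<open>f\<close> makes it inherit the
  property of being the identity near an end.\<close>
lemma quasi_inverse_exists:
  assumes "quasi_isometry f"
  obtains g B B' where "quasi_isometry g" "\<And>x. \<bar>g (f x) - x\<bar> \<le> B"
    "\<And>y. \<bar>f (g y) - y\<bar> \<le> B'" "\<And>x. f x = x \<Longrightarrow> g x = x"
proof -
  obtain K where K: "K > 1" "\<And>y. \<exists>x. \<bar>y - f x\<bar> \<le> K"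
    using quasi_isometryE[OF assms] by metis
  define g where "g y = (if f y = y then y else SOME x. \<bar>y - f x\<bar> \<le> K)" for y
  have right_inv: "\<bar>f (g y) - y\<bar> \<le> K" for y
    using someI_ex[OF K(2)[of y]] K(1) unfolding g_def by (auto simp: abs_minus_commute)
  obtain B where left_inv: "\<forall>x. \<bar>g (f x) - x\<bar> \<le> B"
    using quasi_isometry_right_inverse(2)[OF assms right_inv] by blast
  have "g x = x" if "f x = x" for x using that unfolding g_def by simp
  with left_inv right_inv show ?thesis
    using that[OF quasi_isometry_right_inverse(1)[OF assms right_inv]] by blast
qed

lemma fixes_ends_right_inverse:
  assumes qi: "quasi_isometry f" and fe: "fixes_ends f" and right_inv: "\<And>y. \<bar>f (g y) - y\<bar> \<le> B"
  shows "fixes_ends g"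
proof -
  obtain K C where K: "K > 0" "coarsely_increasing K C f"
    using increasing_qi_if_fixes_ends[OF qi fe] unfolding increasing_qi_def by blast
  have "Z \<le> g y" if "f Z + C + B + 1 \<le> y" for Z y
  proof (rule ccontr)
    assume "\<not> Z \<le> g y"
    then have "0 \<le> (Z - g y) / K" using K(1) by simp
    then show False using coarsely_increasingD[OF K(2), of "g y" Z] \<open>\<not> Z \<le> g y\<close>
      right_inv[of y] that by linarith
  qed
  moreover have "g y \<le> Z" if "y \<le> f Z - C - B - 1" for Z y
  proof (rule ccontr)
    assume "\<not> g y \<le> Z"
    then have "0 \<le> (g y - Z) / K" using K(1) by simp
    then show False using coarsely_increasingD[OF K(2), of Z "g y"] \<open>\<not> g y \<le> Z\<close>
      right_inv[of y] that by linarith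
  qed
  ultimately show ?thesis unfolding fixes_ends_def filterlim_at_top filterlim_at_bot
    eventually_at_top_linorder eventually_at_bot_linorder by blast
qed

section \<open>The group of quasi-isometries and its subgroups\<close>

lemma qi_rel_iff:
  "(f, g) \<in> qi_rel \<longleftrightarrow> quasi_isometry f \<and> quasi_isometry g \<and> (\<exists>B. \<forall>x. \<bar>f x - g x\<bar> \<le> B)"
  by (simp add: qi_rel_def)

lemma equiv_qi_rel: "equiv {f. quasi_isometry f} qi_rel"
proof (rule equivI)
  show "qi_rel \<subseteq> {f. quasi_isometry f} \<times> {f. quasi_isometry f}" by (auto simp: qi_rel_def)
  show "refl_on {f. quasi_isometry f} qi_rel"
    unfolding refl_on_def by (auto simp: qi_rel_iff intro!: exI[of _ 0])
  show "sym qi_rel"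
    unfolding sym_def qi_rel_iff by (simp add: abs_minus_commute)
  show "trans qi_rel" unfolding trans_def
  proof (intro allI impI)
    fix f g h assume fg: "(f, g) \<in> qi_rel" and gh: "(g, h) \<in> qi_rel"
    then obtain B1 B2 where B: "\<forall>x. \<bar>f x - g x\<bar> \<le> B1" "\<forall>x. \<bar>g x - h x\<bar> \<le> B2"
      by (auto simp: qi_rel_iff)
    have "\<bar>f x - h x\<bar> \<le> B1 + B2" for x
      using B[rule_format, of x] by linarith
    then have "\<forall>x. \<bar>f x - h x\<bar> \<le> B1 + B2" ..
    then show "(f, h) \<in> qi_rel" using fg gh by (auto simp: qi_rel_iff)
  qed
qed

lemma qi_class_self: "quasi_isometry f \<Longrightarrow> f \<in> qi_class f"
  using equiv_class_self[OF equiv_qi_rel] by (simp add: qi_class_def)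

lemma qi_class_eq: "(f, g) \<in> qi_rel \<Longrightarrow> qi_class f = qi_class g"
  using equiv_class_eq[OF equiv_qi_rel] by (simp add: qi_class_def)

lemma qi_class_eq_iff:
  "quasi_isometry f \<Longrightarrow> quasi_isometry g \<Longrightarrow> qi_class f = qi_class g \<longleftrightarrow> (f, g) \<in> qi_rel"
  using eq_equiv_class_iff[OF equiv_qi_rel] by (simp add: qi_class_def)

lemma qi_class_in_carrier: "quasi_isometry f \<Longrightarrow> qi_class f \<in> carrier QI"
  unfolding QI_def qi_class_def by (auto intro: quotientI)

lemma carrier_QI_member:
  assumes "A \<in> carrier QI" "f \<in> A"
  shows "quasi_isometry f" "A = qi_class f"
proof -
  obtain g where g: "quasi_isometry g" "A = qi_class g"
    using assms(1) unfolding QI_def qi_class_def by (auto elim: quotientE)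
  then have "(g, f) \<in> qi_rel" using assms(2) by (simp add: qi_class_def)
  then show "quasi_isometry f" "A = qi_class f" using g(2) qi_class_eq by (auto simp: qi_rel_iff)
qed

lemma carrier_QI_obtain:
  assumes "A \<in> carrier QI"
  obtains f where "quasi_isometry f" "A = qi_class f"
  using assms unfolding QI_def qi_class_def by (auto elim: quotientE)

lemma qi_rel_comp:
  assumes "(f, f') \<in> qi_rel" "(g, g') \<in> qi_rel"
  shows "(f \<circ> g, f' \<circ> g') \<in> qi_rel"
proof -
  obtain B1 where B1: "\<forall>x. \<bar>f x - f' x\<bar> \<le> B1" and qf: "quasi_isometry f" "quasi_isometry f'"
    using assms(1) by (auto simp: qi_rel_iff)
  obtain B2 where B2: "\<forall>x. \<bar>g x - g' x\<bar> \<le> B2" and qg: "quasi_isometry g" "quasi_isometry g'"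
    using assms(2) by (auto simp: qi_rel_iff)
  obtain K where K: "K > 1" "coarse_lip K f" using quasi_isometryE[OF qf(1)] by metis
  have "\<bar>f (g x) - f' (g' x)\<bar> \<le> K * B2 + K + B1" for x
  proof -
    have "K * \<bar>g x - g' x\<bar> \<le> K * B2" using B2 K(1) by (intro mult_left_mono) auto
    then show ?thesis using coarse_lipD[OF K(2), of "g x" "g' x"] B1[rule_format, of "g' x"] by linarith
  qed
  then show ?thesis using quasi_isometry_comp qf qg by (auto simp: qi_rel_iff)
qed

lemma mult_qi_class:
  assumes "quasi_isometry f" "quasi_isometry g"
  shows "qi_class f \<otimes>\<^bsub>QI\<^esub> qi_class g = qi_class (f \<circ> g)"
proof -
  have some_mem: "(SOME h'. h' \<in> qi_class h) \<in> qi_class h" if "quasi_isometry h" for h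
    using qi_class_self[OF that] by (rule someI[of "\<lambda>h'. h' \<in> qi_class h"])
  have "(f \<circ> g, (SOME f'. f' \<in> qi_class f) \<circ> (SOME g'. g' \<in> qi_class g)) \<in> qi_rel"
    using qi_rel_comp some_mem[OF assms(1)] some_mem[OF assms(2)] by (simp add: qi_class_def)
  then show ?thesis unfolding QI_def by (simp add: qi_class_eq)
qed

lemma one_QI: "\<one>\<^bsub>QI\<^esub> = qi_class id"
  by (simp add: QI_def)

lemma qi_class_eq_one_iff: "quasi_isometry f \<Longrightarrow> qi_class f = \<one>\<^bsub>QI\<^esub> \<longleftrightarrow> (f, id) \<in> qi_rel"
  unfolding one_QI using qi_class_eq_iff quasi_isometry_id by blast

lemma qi_class_left_inverse:
  assumes "quasi_isometry f" "quasi_isometry g" "\<And>x. \<bar>g (f x) - x\<bar> \<le> B"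
  shows "qi_class g \<otimes>\<^bsub>QI\<^esub> qi_class f = \<one>\<^bsub>QI\<^esub>"
  unfolding mult_qi_class[OF assms(2,1)] qi_class_eq_one_iff[OF quasi_isometry_comp[OF assms(2,1)]]
  using assms quasi_isometry_comp quasi_isometry_id by (auto simp: qi_rel_iff)

lemma group_QI: "group QI"
proof (rule groupI)
  fix x y z assume xyz: "x \<in> carrier QI" "y \<in> carrier QI" "z \<in> carrier QI"
  obtain f g h where fgh: "quasi_isometry f" "quasi_isometry g" "quasi_isometry h"
    and eq: "x = qi_class f" "y = qi_class g" "z = qi_class h"
    using carrier_QI_obtain[OF xyz(1)] carrier_QI_obtain[OF xyz(2)] carrier_QI_obtain[OF xyz(3)]
    by metis
  show "x \<otimes>\<^bsub>QI\<^esub> y \<in> carrier QI"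
    unfolding eq mult_qi_class[OF fgh(1,2)] using qi_class_in_carrier quasi_isometry_comp fgh by blast
  show "x \<otimes>\<^bsub>QI\<^esub> y \<otimes>\<^bsub>QI\<^esub> z = x \<otimes>\<^bsub>QI\<^esub> (y \<otimes>\<^bsub>QI\<^esub> z)"
    unfolding eq using fgh by (simp add: mult_qi_class quasi_isometry_comp comp_assoc)
next
  show "\<one>\<^bsub>QI\<^esub> \<in> carrier QI" unfolding one_QI by (rule qi_class_in_carrier[OF quasi_isometry_id])
next
  fix x assume "x \<in> carrier QI"
  then obtain f where f: "quasi_isometry f" "x = qi_class f" by (rule carrier_QI_obtain)
  show "\<one>\<^bsub>QI\<^esub> \<otimes>\<^bsub>QI\<^esub> x = x" unfolding f(2) one_QI mult_qi_class[OF quasi_isometry_id f(1)] by simp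
  obtain g B where "quasi_isometry g" "\<And>x. \<bar>g (f x) - x\<bar> \<le> B"
    using quasi_inverse_exists[OF f(1)] by metis
  then show "\<exists>y\<in>carrier QI. y \<otimes>\<^bsub>QI\<^esub> x = \<one>\<^bsub>QI\<^esub>"
    unfolding f(2) using qi_class_left_inverse[OF f(1)] qi_class_in_carrier by blast
qed

lemma inv_qi_class:
  assumes "quasi_isometry f" "quasi_isometry g" "\<And>x. \<bar>g (f x) - x\<bar> \<le> B"
  shows "inv\<^bsub>QI\<^esub> (qi_class f) = qi_class g"
  using group.inv_equality[OF group_QI qi_class_left_inverse[OF assms]] qi_class_in_carrier assms(1,2)
  by blast

definition classes_with :: "((real \<Rightarrow> real) \<Rightarrow> bool) \<Rightarrow> (real \<Rightarrow> real) set set" where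
  "classes_with P = {C \<in> carrier QI. \<exists>f\<in>C. P f}"

lemma QI_plus_eq: "QI_plus = classes_with fixes_ends"
  and Q_plus_eq: "Q_plus = classes_with id_near_minus_inf"
  and Q_minus_eq: "Q_minus = classes_with id_near_plus_inf"
  unfolding QI_plus_def Q_plus_def Q_minus_def classes_with_def by simp_all

lemma qi_class_in_classes_with: "quasi_isometry f \<Longrightarrow> P f \<Longrightarrow> qi_class f \<in> classes_with P"
  unfolding classes_with_def using qi_class_in_carrier qi_class_self by blast

lemma classes_withE:
  assumes "C \<in> classes_with P"
  obtains f where "quasi_isometry f" "C = qi_class f" "P f"
  using assms carrier_QI_member unfolding classes_with_def by blast

lemma classes_with_subset:
  "(\<And>f. quasi_isometry f \<Longrightarrow> P f \<Longrightarrow> Q f) \<Longrightarrow> classes_with P \<subseteq> classes_with Q"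
  by (auto elim!: classes_withE intro: qi_class_in_classes_with)

lemma subgroup_classes_with:
  assumes id: "P id"
    and comp: "\<And>f g. quasi_isometry f \<Longrightarrow> quasi_isometry g \<Longrightarrow> P f \<Longrightarrow> P g \<Longrightarrow> P (f \<circ> g)"
    and inverse: "\<And>f. quasi_isometry f \<Longrightarrow> P f \<Longrightarrow>
      \<exists>g B. quasi_isometry g \<and> (\<forall>x. \<bar>g (f x) - x\<bar> \<le> B) \<and> P g"
  shows "subgroup (classes_with P) QI"
proof (rule group.subgroupI[OF group_QI])
  show "classes_with P \<subseteq> carrier QI" unfolding classes_with_def by blast
  show "classes_with P \<noteq> {}" using qi_class_in_classes_with[of id P, OF quasi_isometry_id id] by blast
next
  fix a assume "a \<in> classes_with P"
  then obtain f where f: "quasi_isometry f" "a = qi_class f" "P f" by (rule classes_withE)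
  then obtain g B where "quasi_isometry g" "\<forall>x. \<bar>g (f x) - x\<bar> \<le> B" "P g" using inverse by blast
  then show "inv\<^bsub>QI\<^esub> a \<in> classes_with P"
    unfolding f(2) using inv_qi_class[OF f(1)] qi_class_in_classes_with by metis
next
  fix a b assume "a \<in> classes_with P" "b \<in> classes_with P"
  then obtain f g where "quasi_isometry f" "a = qi_class f" "P f" "quasi_isometry g" "b = qi_class g" "P g"
    by (metis classes_withE)
  then show "a \<otimes>\<^bsub>QI\<^esub> b \<in> classes_with P"
    using mult_qi_class qi_class_in_classes_with quasi_isometry_comp comp by metis
qed

lemma subgroup_QI_plus: "subgroup QI_plus QI"
  unfolding QI_plus_eq
proof (rule subgroup_classes_with)
  show "fixes_ends id" by (rule fixes_ends_id)
  show "fixes_ends (f \<circ> g)" if "fixes_ends f" "fixes_ends g" for f g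
    using that unfolding fixes_ends_def comp_def using filterlim_compose by blast
  fix f assume f: "quasi_isometry f" "fixes_ends f"
  obtain g B B' where "quasi_isometry g" "\<And>x. \<bar>g (f x) - x\<bar> \<le> B" "\<And>y. \<bar>f (g y) - y\<bar> \<le> B'"
    using quasi_inverse_exists[OF f(1)] by metis
  then show "\<exists>g B. quasi_isometry g \<and> (\<forall>x. \<bar>g (f x) - x\<bar> \<le> B) \<and> fixes_ends g"
    using fixes_ends_right_inverse[OF f] by blast
qed

lemma subgroup_Q_plus: "subgroup Q_plus QI"
  unfolding Q_plus_eq
proof (rule subgroup_classes_with)
  show "id_near_minus_inf id" unfolding id_near_minus_inf_def by simp
  show "id_near_minus_inf (f \<circ> g)" if fg: "id_near_minus_inf f" "id_near_minus_inf g" for f g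
  proof -
    obtain c d where "\<forall>t\<le>c. f t = t" "\<forall>t\<le>d. g t = t"
      using fg unfolding id_near_minus_inf_def by blast
    then show ?thesis unfolding id_near_minus_inf_def by (intro exI[of _ "min c d"]) auto
  qed
  fix f assume "quasi_isometry f" "id_near_minus_inf f"
  then show "\<exists>g B. quasi_isometry g \<and> (\<forall>x. \<bar>g (f x) - x\<bar> \<le> B) \<and> id_near_minus_inf g"
    using quasi_inverse_exists unfolding id_near_minus_inf_def by metis
qed

lemma subgroup_Q_minus: "subgroup Q_minus QI"
  unfolding Q_minus_eq
proof (rule subgroup_classes_with)
  show "id_near_plus_inf id" unfolding id_near_plus_inf_def by simp
  show "id_near_plus_inf (f \<circ> g)" if fg: "id_near_plus_inf f" "id_near_plus_inf g" for f g
  proof -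
    obtain c d where "\<forall>t\<ge>c. f t = t" "\<forall>t\<ge>d. g t = t"
      using fg unfolding id_near_plus_inf_def by blast
    then show ?thesis unfolding id_near_plus_inf_def by (intro exI[of _ "max c d"]) auto
  qed
  fix f assume "quasi_isometry f" "id_near_plus_inf f"
  then show "\<exists>g B. quasi_isometry g \<and> (\<forall>x. \<bar>g (f x) - x\<bar> \<le> B) \<and> id_near_plus_inf g"
    using quasi_inverse_exists unfolding id_near_plus_inf_def by metis
qed

lemma Q_plus_subset_QI_plus: "Q_plus \<subseteq> QI_plus"
  unfolding Q_plus_eq QI_plus_eq by (rule classes_with_subset[OF fixes_ends_if_id_near_minus_inf])

lemma Q_minus_subset_QI_plus: "Q_minus \<subseteq> QI_plus"
  unfolding Q_minus_eq QI_plus_eq by (rule classes_with_subset[OF fixes_ends_if_id_near_plus_inf])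

section \<open>The decomposition\<close>

lemma qi_rel_if_close_outside_interval:
  assumes qf: "quasi_isometry f" and qg: "quasi_isometry g"
    and close: "\<And>x. x \<le> L \<or> U \<le> x \<Longrightarrow> \<bar>f x - g x\<bar> \<le> B"
  shows "(f, g) \<in> qi_rel"
proof -
  obtain K1 where K1: "coarse_lip K1 f" using quasi_isometryE[OF qf] by metis
  obtain K2 where K2: "coarse_lip K2 g" using quasi_isometryE[OF qg] by metis
  define M where "M = \<bar>f L\<bar> + K1 * (U - L) + K1 + \<bar>g L\<bar> + K2 * (U - L) + K2"
  have "\<bar>f x - g x\<bar> \<le> max B M" for x
  proof (cases "x \<le> L \<or> U \<le> x")
    case True then show ?thesis using close by force
  next
    case False
    then show ?thesis using coarse_lip_bounded_on_interval[OF K1, of L x U]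
        coarse_lip_bounded_on_interval[OF K2, of L x U] unfolding M_def by force
  qed
  then show ?thesis using qf qg unfolding qi_rel_iff by blast
qed

lemma Q_plus_Int_Q_minus: "Q_plus \<inter> Q_minus = {\<one>\<^bsub>QI\<^esub>}"
proof
  show "{\<one>\<^bsub>QI\<^esub>} \<subseteq> Q_plus \<inter> Q_minus"
    unfolding one_QI Q_plus_eq Q_minus_eq id_near_minus_inf_def id_near_plus_inf_def
    using qi_class_in_classes_with[OF quasi_isometry_id] by auto
  show "Q_plus \<inter> Q_minus \<subseteq> {\<one>\<^bsub>QI\<^esub>}"
  proof
    fix C assume "C \<in> Q_plus \<inter> Q_minus"
    then obtain f g where f: "quasi_isometry f" "C = qi_class f" "id_near_minus_inf f"
      and g: "quasi_isometry g" "C = qi_class g" "id_near_plus_inf g"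
      unfolding Q_plus_eq Q_minus_eq by (auto elim!: classes_withE)
    obtain c d where c: "\<forall>t\<le>c. f t = t" and d: "\<forall>t\<ge>d. g t = t"
      using f(3) g(3) unfolding id_near_minus_inf_def id_near_plus_inf_def by blast
    have "(f, g) \<in> qi_rel" using f(1,2) g(1,2) qi_class_eq_iff by blast
    then obtain B where B: "\<forall>x. \<bar>f x - g x\<bar> \<le> B" unfolding qi_rel_iff by blast
    have "\<bar>f x - id x\<bar> \<le> B" if "x \<le> c \<or> d \<le> x" for x
      using that c d B[rule_format, of x] by auto
    then have "(f, id) \<in> qi_rel" by (rule qi_rel_if_close_outside_interval[OF f(1) quasi_isometry_id])
    then show "C \<in> {\<one>\<^bsub>QI\<^esub>}" using f(2) qi_class_eq_one_iff[OF f(1)] by simp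
  qed
qed

text \<open>Far to the left both composites reduce to \<open>g\<close>, far to the right both reduce to \<open>f\<close>.\<close>
lemma Q_plus_Q_minus_commute: "\<forall>a\<in>Q_plus. \<forall>b\<in>Q_minus. a \<otimes>\<^bsub>QI\<^esub> b = b \<otimes>\<^bsub>QI\<^esub> a"
proof (intro ballI)
  fix a b assume "a \<in> Q_plus" "b \<in> Q_minus"
  obtain f g where f: "quasi_isometry f" "a = qi_class f" "id_near_minus_inf f"
    and g: "quasi_isometry g" "b = qi_class g" "id_near_plus_inf g"
    using \<open>a \<in> Q_plus\<close> \<open>b \<in> Q_minus\<close> unfolding Q_plus_eq Q_minus_eq
    by (auto elim!: classes_withE)
  obtain c d where c: "\<forall>t\<le>c. f t = t" and d: "\<forall>t\<ge>d. g t = t"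
    using f(3) g(3) unfolding id_near_minus_inf_def id_near_plus_inf_def by blast
  have "fixes_ends f" "fixes_ends g"
    using fixes_ends_if_id_near_minus_inf[OF f(1,3)] fixes_ends_if_id_near_plus_inf[OF g(1,3)] .
  then obtain L U where L: "\<forall>t\<le>L. g t \<le> c" and U: "\<forall>t\<ge>U. d \<le> f t"
    unfolding fixes_ends_def filterlim_at_bot filterlim_at_top
      eventually_at_bot_linorder eventually_at_top_linorder by meson
  have "\<bar>(f \<circ> g) x - (g \<circ> f) x\<bar> \<le> 0" if "x \<le> min L c \<or> max U d \<le> x" for x
  proof -
    have "f (g x) = g (f x)"
    proof (cases "x \<le> min L c")
      case True then show ?thesis using c L by simp
    next
      case False then show ?thesis using that d U by auto
    qed
    then show ?thesis by simp
  qed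
  then have "(f \<circ> g, g \<circ> f) \<in> qi_rel"
    by (intro qi_rel_if_close_outside_interval quasi_isometry_comp f(1) g(1))
  then show "a \<otimes>\<^bsub>QI\<^esub> b = b \<otimes>\<^bsub>QI\<^esub> a"
    unfolding f(2) g(2) mult_qi_class[OF f(1) g(1)] mult_qi_class[OF g(1) f(1)]
    by (rule qi_class_eq)
qed

lemma QI_plus_eq_set_mult: "QI_plus = Q_plus <#>\<^bsub>QI\<^esub> Q_minus"
proof
  show "Q_plus <#>\<^bsub>QI\<^esub> Q_minus \<subseteq> QI_plus"
    using subgroup.m_closed[OF subgroup_QI_plus] Q_plus_subset_QI_plus Q_minus_subset_QI_plus
    unfolding set_mult_def by blast
  show "QI_plus \<subseteq> Q_plus <#>\<^bsub>QI\<^esub> Q_minus"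
  proof
    fix C assume "C \<in> QI_plus"
    then obtain h where h: "quasi_isometry h" "C = qi_class h" "fixes_ends h"
      unfolding QI_plus_eq by (rule classes_withE)
    define f where "f t = (if t \<le> 0 then t else h t)" for t
    define p where "p t = (if t \<le> 0 then h t else t)" for t
    have inc: "increasing_qi h" "increasing_qi id"
      using increasing_qi_if_fixes_ends h(1,3) quasi_isometry_id fixes_ends_id by auto
    have "increasing_qi f" "increasing_qi p"
      unfolding f_def[abs_def] p_def[abs_def]
      using increasing_qi_glue[OF inc(2,1), of 0, unfolded id_def]
        increasing_qi_glue[OF inc(1,2), of 0, unfolded id_def] .
    then have qi: "quasi_isometry f" "quasi_isometry p"
      by (simp_all add: quasi_isometry_if_increasing_qi)
    have "qi_class f \<in> Q_plus"
      unfolding Q_plus_eq id_near_minus_inf_def f_def using qi(1)[unfolded f_def]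
      by (intro qi_class_in_classes_with) auto
    moreover have "qi_class p \<in> Q_minus"
      unfolding Q_minus_eq id_near_plus_inf_def p_def using qi(2)[unfolded p_def]
      by (intro qi_class_in_classes_with exI[of _ 1]) auto
    moreover obtain T where T: "\<forall>t\<le>T. h t \<le> 0"
      using h(3) unfolding fixes_ends_def filterlim_at_bot eventually_at_bot_linorder by blast
    have "\<bar>h x - (f \<circ> p) x\<bar> \<le> 0" if "x \<le> min T 0 \<or> 1 \<le> x" for x
      using that T unfolding f_def p_def by auto
    then have "(h, f \<circ> p) \<in> qi_rel"
      by (intro qi_rel_if_close_outside_interval h(1) quasi_isometry_comp qi)
    then have "C = qi_class f \<otimes>\<^bsub>QI\<^esub> qi_class p"
      unfolding h(2) mult_qi_class[OF qi] by (rule qi_class_eq)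
    ultimately show "C \<in> Q_plus <#>\<^bsub>QI\<^esub> Q_minus" unfolding set_mult_def by blast
  qed
qed

lemma (in group) iso_internal_direct_product:
  assumes H: "subgroup H G" and K: "subgroup K G" and "H \<inter> K = {\<one>}"
    and "\<forall>x\<in>H. \<forall>y\<in>K. x \<otimes> y = y \<otimes> x" and "H <#> K = carrier G"
  shows "G \<cong> G\<lparr>carrier := H\<rparr> \<times>\<times> G\<lparr>carrier := K\<rparr>"
proof -
  interpret group_disjoint_sum G H K
    using H K by (simp add: group_disjoint_sum_def group_axioms)
  have "subgroup_generated G H = G\<lparr>carrier := H\<rparr>" "subgroup_generated G K = G\<lparr>carrier := K\<rparr>"
    using subgroup.carrier_subgroup_generated_subgroup[OF H]
      subgroup.carrier_subgroup_generated_subgroup[OF K]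
    unfolding subgroup_generated_def by simp_all
  then have "G\<lparr>carrier := H\<rparr> \<times>\<times> G\<lparr>carrier := K\<rparr> \<cong> G"
    using iso_group_mul_alt assms unfolding is_iso_def by auto
  then show ?thesis
    using group.iso_sym DirProd_group subgroup_imp_group H K by blast
qed

theorem mainTheorem2:
  shows "group QI
    \<and> subgroup QI_plus QI
    \<and> subgroup Q_plus QI \<and> subgroup Q_minus QI
    \<and> Q_plus \<subseteq> QI_plus \<and> Q_minus \<subseteq> QI_plus
    \<and> Q_plus \<inter> Q_minus = {\<one>\<^bsub>QI\<^esub>}
    \<and> (\<forall>a\<in>Q_plus. \<forall>b\<in>Q_minus. a \<otimes>\<^bsub>QI\<^esub> b = b \<otimes>\<^bsub>QI\<^esub> a)
    \<and> QI_plus = Q_plus <#>\<^bsub>QI\<^esub> Q_minus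
    \<and> QI\<lparr>carrier := QI_plus\<rparr> \<cong> QI\<lparr>carrier := Q_plus\<rparr> \<times>\<times> QI\<lparr>carrier := Q_minus\<rparr>"
proof -
  let ?G = "QI\<lparr>carrier := QI_plus\<rparr>"
  have "?G \<cong> ?G\<lparr>carrier := Q_plus\<rparr> \<times>\<times> ?G\<lparr>carrier := Q_minus\<rparr>"
  proof (rule group.iso_internal_direct_product)
    show "group ?G" by (rule group.subgroup_imp_group[OF group_QI subgroup_QI_plus])
    show "subgroup Q_plus ?G" "subgroup Q_minus ?G"
      using group.subgroup_incl[OF group_QI _ subgroup_QI_plus] subgroup_Q_plus subgroup_Q_minus
        Q_plus_subset_QI_plus Q_minus_subset_QI_plus by auto
    show "Q_plus \<inter> Q_minus = {\<one>\<^bsub>?G\<^esub>}" using Q_plus_Int_Q_minus by simp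
    show "\<forall>x\<in>Q_plus. \<forall>y\<in>Q_minus. x \<otimes>\<^bsub>?G\<^esub> y = y \<otimes>\<^bsub>?G\<^esub> x"
      using Q_plus_Q_minus_commute by simp
    show "Q_plus <#>\<^bsub>?G\<^esub> Q_minus = carrier ?G"
      using QI_plus_eq_set_mult by (simp add: set_mult_def)
  qed
  then show ?thesis
    using group_QI subgroup_QI_plus subgroup_Q_plus subgroup_Q_minus Q_plus_subset_QI_plus
      Q_minus_subset_QI_plus Q_plus_Int_Q_minus Q_plus_Q_minus_commute QI_plus_eq_set_mult
    by simp
qed

end
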